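(* The functions $(x,t)\mapsto F(x,t)$ and $(x,t)\mapsto G(x,t)$ are locally Lipschitz continuous on $[0,\infty)\times[0,\infty)$.
   Context: Standing assumptions: $u_0,u_b:[0,\infty)\to\mathbb{R}$ bounded measurable with $u_b>0$; $\rho_0,\rho_b:[0,\infty)\to(0,\infty)$ positive locally bounded measurable. For $x,t,y,\tau\ge0$: $F(y,x,t)=\int_0^y[tu_0(\eta)+\eta-x]\rho_0(\eta)\,d\eta$, $G(\tau,x,t)=\int_0^\tau[x-u_b(\eta)(t-\eta)]\rho_b(\eta)u_b(\eta)\,d\eta$, and $F(x,t)=\min_{y\ge0}F(y,x,t)$, $G(x,t)=\min_{\tau\ge0}G(\tau,x,t)$ (the minima are attained). *)

theory Defs
  imports "HOL-Analysis.Analysis"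
begin

definition Fyxt :: "(real \<Rightarrow> real) \<Rightarrow> (real \<Rightarrow> real) \<Rightarrow> real \<Rightarrow> real \<Rightarrow> real \<Rightarrow> real" where
  "Fyxt u0 \<rho>0 y x t = set_lebesgue_integral lborel {0..y} (\<lambda>\<eta>. (t * u0 \<eta> + \<eta> - x) * \<rho>0 \<eta>)"

definition Gtxt :: "(real \<Rightarrow> real) \<Rightarrow> (real \<Rightarrow> real) \<Rightarrow> real \<Rightarrow> real \<Rightarrow> real \<Rightarrow> real" where
  "Gtxt ub \<rho>b \<tau> x t = set_lebesgue_integral lborel {0..\<tau>} (\<lambda>\<eta>. (x - ub \<eta> * (t - \<eta>)) * \<rho>b \<eta> * ub \<eta>)"

text \<open>F(x,t) = min over y >= 0 (the minimum is attained, so it equals the infimum).\<close>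
definition Fmin :: "(real \<Rightarrow> real) \<Rightarrow> (real \<Rightarrow> real) \<Rightarrow> real \<Rightarrow> real \<Rightarrow> real" where
  "Fmin u0 \<rho>0 x t = Inf ((\<lambda>y. Fyxt u0 \<rho>0 y x t) ` {0..})"

definition Gmin :: "(real \<Rightarrow> real) \<Rightarrow> (real \<Rightarrow> real) \<Rightarrow> real \<Rightarrow> real \<Rightarrow> real" where
  "Gmin ub \<rho>b x t = Inf ((\<lambda>\<tau>. Gtxt ub \<rho>b \<tau> x t) ` {0..})"

definition locally_lipschitz_on :: "('a::metric_space) set \<Rightarrow> ('a \<Rightarrow> 'b::metric_space) \<Rightarrow> bool" where
  "locally_lipschitz_on S f \<longleftrightarrow> (\<forall>p\<in>S. \<exists>r>0. \<exists>L. L-lipschitz_on (ball p r \<inter> S) f)"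

end

theory Submission
  imports Defs
begin

text \<open>Both \<open>F\<close> and \<open>G\<close> are infima over \<open>y \<ge> 0\<close> of partial integrals \<open>\<integral>\<^sub>0\<^sup>y (t A + x B + C)\<close>
  whose integrand is nonnegative for \<open>\<eta> \<ge> x + K t\<close>. Near a point \<open>(x\<^sub>0, t\<^sub>0)\<close> the infimum can
  therefore be taken over one fixed compact interval \<open>[0, Y]\<close>. There the partial integrals depend
  on \<open>(x, t)\<close> with a Lipschitz constant \<open>Y (sup |A| + sup |B|)\<close> that is uniform in \<open>y\<close>, and an
  infimum of uniformly Lipschitz functions is Lipschitz.\<close>

definition inf_partial_integral :: "(real \<Rightarrow> real) \<Rightarrow> real" where
  "inf_partial_integral g = Inf ((\<lambda>y. LINT \<eta>:{0..y}|lborel. g \<eta>) ` {0..})"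

definition locally_bounded_on_halfline :: "(real \<Rightarrow> real) \<Rightarrow> bool" where
  "locally_bounded_on_halfline f \<longleftrightarrow> (\<forall>T. \<exists>M. \<forall>\<eta>\<in>{0..T}. \<bar>f \<eta>\<bar> \<le> M)"

lemma locally_bounded_on_halfline_if_bounded:
  "\<exists>M. \<forall>\<eta>\<ge>0. \<bar>f \<eta>\<bar> \<le> M \<Longrightarrow> locally_bounded_on_halfline f"
  unfolding locally_bounded_on_halfline_def by fastforce

lemma locally_bounded_on_halfline_ident: "locally_bounded_on_halfline (\<lambda>\<eta>. \<eta>)"
  unfolding locally_bounded_on_halfline_def by (auto intro!: exI)

lemma locally_bounded_on_halfline_minus:
  "locally_bounded_on_halfline f \<Longrightarrow> locally_bounded_on_halfline (\<lambda>\<eta>. - f \<eta>)"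
  unfolding locally_bounded_on_halfline_def by simp

lemma locally_bounded_on_halfline_mult:
  assumes "locally_bounded_on_halfline f" "locally_bounded_on_halfline g"
  shows "locally_bounded_on_halfline (\<lambda>\<eta>. f \<eta> * g \<eta>)"
  unfolding locally_bounded_on_halfline_def
proof
  fix T
  obtain M N where "\<forall>\<eta>\<in>{0..T}. \<bar>f \<eta>\<bar> \<le> M" "\<forall>\<eta>\<in>{0..T}. \<bar>g \<eta>\<bar> \<le> N"
    using assms unfolding locally_bounded_on_halfline_def by meson
  then have "\<forall>\<eta>\<in>{0..T}. \<bar>f \<eta> * g \<eta>\<bar> \<le> M * N"
    by (auto simp: abs_mult intro!: mult_mono)
  then show "\<exists>M. \<forall>\<eta>\<in>{0..T}. \<bar>f \<eta> * g \<eta>\<bar> \<le> M" ..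
qed

lemma set_borel_measurable_iff_restrict_space:
  fixes f :: "'a \<Rightarrow> 'b::real_normed_vector"
  assumes "S \<in> sets M"
  shows "set_borel_measurable M S f \<longleftrightarrow> f \<in> borel_measurable (restrict_space M S)"
  using assms by (simp add: set_borel_measurable_def borel_measurable_restrict_space_iff)

lemma borel_measurable_restrict_space_ident:
  "(\<lambda>x::real. x) \<in> borel_measurable (restrict_space lborel S)"
  by (rule measurable_restrict_space1) simp

lemma set_integrable_Icc_if_bounded:
  fixes g :: "real \<Rightarrow> real"
  assumes "set_borel_measurable lborel {a..b} g" "\<And>\<eta>. \<eta> \<in> {a..b} \<Longrightarrow> \<bar>g \<eta>\<bar> \<le> M"
  shows "set_integrable lborel {a..b} g"
  unfolding set_integrable_def using assms
  by (intro integrableI_bounded_set[where A = "{a..b}" and B = M])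
    (auto simp: set_borel_measurable_def emeasure_lborel_Icc_eq)

lemma abs_set_integral_Icc_le:
  fixes g :: "real \<Rightarrow> real"
  assumes "set_integrable lborel {a..b} g" "a \<le> b" "\<And>\<eta>. \<eta> \<in> {a..b} \<Longrightarrow> \<bar>g \<eta>\<bar> \<le> M"
  shows "\<bar>LINT \<eta>:{a..b}|lborel. g \<eta>\<bar> \<le> (b - a) * M"
proof -
  have "set_integrable lborel {a..b} (\<lambda>_. M)"
    unfolding set_integrable_def
    by (intro integrableI_bounded_set[where A = "{a..b}" and B = "\<bar>M\<bar>"]) (auto simp: emeasure_lborel_Icc_eq)
  have "\<bar>LINT \<eta>:{a..b}|lborel. g \<eta>\<bar> \<le> (LINT \<eta>:{a..b}|lborel. \<bar>g \<eta>\<bar>)"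
    using set_integral_norm_bound[OF assms(1)] by simp
  also have "\<dots> \<le> (LINT \<eta>:{a..b}|lborel. M)"
    using assms \<open>set_integrable lborel {a..b} (\<lambda>_. M)\<close>
    by (intro set_integral_mono set_integrable_abs) auto
  also have "\<dots> = (b - a) * M"
    using assms(2) by (simp add: set_integral_const emeasure_lborel_Icc_eq)
  finally show ?thesis .
qed

lemma set_integral_Icc_mono_upper:
  fixes g :: "real \<Rightarrow> real"
  assumes "set_integrable lborel {a..c} g" "a \<le> b" "b \<le> c" "\<And>\<eta>. \<eta> \<in> {b..c} \<Longrightarrow> 0 \<le> g \<eta>"
  shows "(LINT \<eta>:{a..b}|lborel. g \<eta>) \<le> (LINT \<eta>:{a..c}|lborel. g \<eta>)"
proof -
  have integrable: "set_integrable lborel {a..b} g" "set_integrable lborel {b<..c} g"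
    using assms by (auto intro: set_integrable_subset)
  have "0 \<le> (LINT \<eta>:{b<..c}|lborel. g \<eta>)"
    using assms(4) unfolding set_lebesgue_integral_def
    by (intro integral_nonneg_AE) (auto split: split_indicator)
  have split: "{a..c} = {a..b} \<union> {b<..c}"
    using assms by auto
  have "(LINT \<eta>:{a..c}|lborel. g \<eta>) =
      (LINT \<eta>:{a..b}|lborel. g \<eta>) + (LINT \<eta>:{b<..c}|lborel. g \<eta>)"
    unfolding split by (rule set_integral_Un) (use integrable in auto)
  with \<open>0 \<le> (LINT \<eta>:{b<..c}|lborel. g \<eta>)\<close> show ?thesis
    by simp
qed

lemma cInf_image_atLeast_eq_atLeastAtMost:
  fixes f :: "'a::linorder \<Rightarrow> 'b::conditionally_complete_linorder"
  assumes "a \<le> Y" "\<And>y. Y \<le> y \<Longrightarrow> f Y \<le> f y" "bdd_below (f ` {a..Y})"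
  shows "Inf (f ` {a..}) = Inf (f ` {a..Y})"
proof (rule antisym)
  have lower: "Inf (f ` {a..Y}) \<le> f y" if "a \<le> y" for y
  proof (cases "y \<le> Y")
    case True
    with that assms(3) show ?thesis by (auto intro: cInf_lower)
  next
    case False
    then have "Inf (f ` {a..Y}) \<le> f Y"
      using assms(1,3) by (auto intro: cInf_lower)
    also have "\<dots> \<le> f y"
      using False assms(2) by simp
    finally show ?thesis .
  qed
  then show "Inf (f ` {a..Y}) \<le> Inf (f ` {a..})"
    by (auto intro: cInf_greatest)
  have "bdd_below (f ` {a..})"
    by (rule bdd_belowI2[where m = "Inf (f ` {a..Y})"]) (simp add: lower)
  then show "Inf (f ` {a..}) \<le> Inf (f ` {a..Y})"
    using assms(1) by (intro cInf_superset_mono) auto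
qed

lemma abs_cInf_image_diff_le:
  fixes f g :: "'a \<Rightarrow> real"
  assumes "S \<noteq> {}" "bdd_below (f ` S)" "bdd_below (g ` S)"
    and "\<And>s. s \<in> S \<Longrightarrow> \<bar>f s - g s\<bar> \<le> D"
  shows "\<bar>Inf (f ` S) - Inf (g ` S)\<bar> \<le> D"
proof -
  have "Inf (h ` S) - D \<le> Inf (k ` S)"
    if bdd: "bdd_below (h ` S)" and close: "\<And>s. s \<in> S \<Longrightarrow> h s \<le> k s + D" for h k :: "'a \<Rightarrow> real"
  proof -
    have "Inf (h ` S) - D \<le> k s" if "s \<in> S" for s
      using cInf_lower[OF imageI[OF that] bdd] close[OF that] by linarith
    then show ?thesis
      using assms(1) by (intro cInf_greatest) auto
  qed
  from this[of f g] this[of g f] show ?thesis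
    using assms by (fastforce simp: abs_le_iff)
qed

lemma lipschitz_on_inf_partial_integral:
  fixes g :: "'a::metric_space \<Rightarrow> real \<Rightarrow> real"
  assumes "0 \<le> Y" "0 \<le> \<Lambda>"
    and integrable: "\<And>p y. p \<in> U \<Longrightarrow> set_integrable lborel {0..y} (g p)"
    and nonneg: "\<And>p \<eta>. p \<in> U \<Longrightarrow> Y \<le> \<eta> \<Longrightarrow> 0 \<le> g p \<eta>"
    and bound: "\<And>p \<eta>. p \<in> U \<Longrightarrow> \<eta> \<in> {0..Y} \<Longrightarrow> \<bar>g p \<eta>\<bar> \<le> E"
    and lipschitz: "\<And>p q \<eta>. p \<in> U \<Longrightarrow> q \<in> U \<Longrightarrow> \<eta> \<in> {0..Y} \<Longrightarrow> \<bar>g p \<eta> - g q \<eta>\<bar> \<le> \<Lambda> * dist p q"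
  shows "(Y * \<Lambda>)-lipschitz_on U (\<lambda>p. inf_partial_integral (g p))"
proof (rule lipschitz_onI)
  fix p q assume "p \<in> U" "q \<in> U"
  have close: "\<bar>(LINT \<eta>:{0..y}|lborel. g p \<eta>) - (LINT \<eta>:{0..y}|lborel. g q \<eta>)\<bar> \<le> Y * \<Lambda> * dist p q"
    if "y \<in> {0..Y}" for y
  proof -
    have "\<bar>(LINT \<eta>:{0..y}|lborel. g p \<eta>) - (LINT \<eta>:{0..y}|lborel. g q \<eta>)\<bar>
        = \<bar>LINT \<eta>:{0..y}|lborel. g p \<eta> - g q \<eta>\<bar>"
      using \<open>p \<in> U\<close> \<open>q \<in> U\<close> integrable by (subst set_integral_diff) auto
    also have "\<dots> \<le> (y - 0) * (\<Lambda> * dist p q)"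
      using that \<open>p \<in> U\<close> \<open>q \<in> U\<close> lipschitz integrable
      by (intro abs_set_integral_Icc_le set_integral_diff) auto
    also have "\<dots> \<le> Y * \<Lambda> * dist p q"
      using that \<open>0 \<le> \<Lambda>\<close> by (simp add: mult_right_mono mult.assoc)
    finally show ?thesis .
  qed
  have bdd: "bdd_below ((\<lambda>y. LINT \<eta>:{0..y}|lborel. g s \<eta>) ` {0..Y})" if "s \<in> U" for s
  proof (rule bdd_belowI2)
    fix y assume "y \<in> {0..Y}"
    have "0 \<le> E"
      using bound[OF that, of 0] \<open>0 \<le> Y\<close> by force
    have "\<bar>LINT \<eta>:{0..y}|lborel. g s \<eta>\<bar> \<le> (y - 0) * E"
      using that \<open>y \<in> {0..Y}\<close> bound by (intro abs_set_integral_Icc_le integrable) auto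
    also have "\<dots> \<le> Y * E"
      using \<open>y \<in> {0..Y}\<close> \<open>0 \<le> E\<close> by (simp add: mult_right_mono)
    finally show "- (Y * E) \<le> (LINT \<eta>:{0..y}|lborel. g s \<eta>)"
      by (simp add: abs_le_iff)
  qed
  have Inf_Icc: "inf_partial_integral (g s) = Inf ((\<lambda>y. LINT \<eta>:{0..y}|lborel. g s \<eta>) ` {0..Y})"
    if "s \<in> U" for s
    unfolding inf_partial_integral_def using that \<open>0 \<le> Y\<close> nonneg bdd
    by (intro cInf_image_atLeast_eq_atLeastAtMost set_integral_Icc_mono_upper integrable) auto
  show "dist (inf_partial_integral (g p)) (inf_partial_integral (g q)) \<le> Y * \<Lambda> * dist p q"
    unfolding dist_real_def Inf_Icc[OF \<open>p \<in> U\<close>] Inf_Icc[OF \<open>q \<in> U\<close>]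
    using \<open>p \<in> U\<close> \<open>q \<in> U\<close> \<open>0 \<le> Y\<close> by (intro abs_cInf_image_diff_le bdd close) auto
qed (use assms(1,2) in simp)

definition locally_lipschitz_nonneg_tail :: "'a::metric_space set \<Rightarrow> ('a \<Rightarrow> real \<Rightarrow> real) \<Rightarrow> bool" where
  "locally_lipschitz_nonneg_tail S g \<longleftrightarrow> (\<forall>p\<^sub>0\<in>S. \<exists>r>0. \<exists>Y\<ge>0. \<exists>\<Lambda>\<ge>0. \<exists>E. \<forall>p\<in>ball p\<^sub>0 r \<inter> S.
     (\<forall>\<eta>\<ge>Y. 0 \<le> g p \<eta>) \<and>
     (\<forall>\<eta>\<in>{0..Y}. \<bar>g p \<eta>\<bar> \<le> E \<and> (\<forall>q\<in>ball p\<^sub>0 r \<inter> S. \<bar>g p \<eta> - g q \<eta>\<bar> \<le> \<Lambda> * dist p q)))"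

lemma abs_affine_combination_le:
  fixes a b c t x :: real
  assumes "\<bar>a\<bar> \<le> M\<^sub>a" "\<bar>b\<bar> \<le> M\<^sub>b" "\<bar>c\<bar> \<le> M\<^sub>c" "\<bar>t\<bar> \<le> T" "\<bar>x\<bar> \<le> X"
  shows "\<bar>t * a + x * b + c\<bar> \<le> T * M\<^sub>a + X * M\<^sub>b + M\<^sub>c"
proof -
  have "\<bar>t * a\<bar> \<le> T * M\<^sub>a" "\<bar>x * b\<bar> \<le> X * M\<^sub>b"
    using assms by (auto simp: abs_mult intro!: mult_mono)
  then show ?thesis
    using assms(3) by linarith
qed

lemma abs_affine_combination_diff_le:
  fixes a b c t x t' x' :: real
  assumes "\<bar>a\<bar> \<le> M\<^sub>a" "\<bar>b\<bar> \<le> M\<^sub>b"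
  shows "\<bar>(t * a + x * b + c) - (t' * a + x' * b + c)\<bar> \<le> (M\<^sub>a + M\<^sub>b) * dist (x, t) (x', t')"
proof -
  have "\<bar>(t * a + x * b + c) - (t' * a + x' * b + c)\<bar> = \<bar>(t - t') * a + (x - x') * b + 0\<bar>"
    by (simp add: algebra_simps)
  also have "\<dots> \<le> \<bar>t - t'\<bar> * M\<^sub>a + \<bar>x - x'\<bar> * M\<^sub>b"
    using assms by (auto simp: abs_mult intro!: mult_left_mono order.trans[OF abs_triangle_ineq add_mono])
  also have "\<dots> \<le> dist (x, t) (x', t') * M\<^sub>a + dist (x, t) (x', t') * M\<^sub>b"
    using assms dist_fst_le[of "(x, t)" "(x', t')"] dist_snd_le[of "(x, t)" "(x', t')"]
    by (intro add_mono mult_right_mono) (auto simp: dist_real_def order.trans[OF abs_ge_zero])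
  finally show ?thesis
    by (simp add: algebra_simps)
qed

lemma mem_ball_quadrant_bounds:
  fixes a b K :: real
  assumes "p \<in> ball (a, b) 1 \<inter> {0..} \<times> {0..}" "0 \<le> K"
  shows "0 \<le> fst p" "0 \<le> snd p" "fst p \<le> a + 1" "snd p \<le> b + 1"
    and "fst p + K * snd p \<le> a + 1 + K * (b + 1)"
proof -
  show "0 \<le> fst p" "0 \<le> snd p" "fst p \<le> a + 1" "snd p \<le> b + 1"
    using assms dist_fst_le[of "(a, b)" p] dist_snd_le[of "(a, b)" p] by (auto simp: dist_real_def)
  moreover have "K * snd p \<le> K * (b + 1)"
    using \<open>snd p \<le> b + 1\<close> \<open>0 \<le> K\<close> by (rule mult_left_mono)
  ultimately show "fst p + K * snd p \<le> a + 1 + K * (b + 1)"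
    by simp
qed

lemma set_integrable_affine_combination:
  fixes A B C :: "real \<Rightarrow> real"
  assumes measurable: "A \<in> borel_measurable (restrict_space lborel {0..})"
      "B \<in> borel_measurable (restrict_space lborel {0..})"
      "C \<in> borel_measurable (restrict_space lborel {0..})"
    and bounded: "locally_bounded_on_halfline A" "locally_bounded_on_halfline B" "locally_bounded_on_halfline C"
  shows "set_integrable lborel {0..y} (\<lambda>\<eta>. t * A \<eta> + x * B \<eta> + C \<eta>)"
proof -
  obtain M\<^sub>a M\<^sub>b M\<^sub>c where M: "\<forall>\<eta>\<in>{0..y}. \<bar>A \<eta>\<bar> \<le> M\<^sub>a" "\<forall>\<eta>\<in>{0..y}. \<bar>B \<eta>\<bar> \<le> M\<^sub>b"
    "\<forall>\<eta>\<in>{0..y}. \<bar>C \<eta>\<bar> \<le> M\<^sub>c"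
    using bounded unfolding locally_bounded_on_halfline_def by meson
  have "(\<lambda>\<eta>. t * A \<eta> + x * B \<eta> + C \<eta>) \<in> borel_measurable (restrict_space lborel {0..})"
    by (intro borel_measurable_add borel_measurable_times borel_measurable_const measurable)
  then have "set_borel_measurable lborel {0..} (\<lambda>\<eta>. t * A \<eta> + x * B \<eta> + C \<eta>)"
    by (simp add: set_borel_measurable_iff_restrict_space)
  then have "set_borel_measurable lborel {0..y} (\<lambda>\<eta>. t * A \<eta> + x * B \<eta> + C \<eta>)"
    by (rule set_borel_measurable_subset) auto
  then show ?thesis
    using M by (intro set_integrable_Icc_if_bounded[where M = "\<bar>t\<bar> * M\<^sub>a + \<bar>x\<bar> * M\<^sub>b + M\<^sub>c"]
        abs_affine_combination_le) auto
qed

lemma locally_lipschitz_nonneg_tail_affine: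
  fixes A B C :: "real \<Rightarrow> real" and K :: real
  assumes bounded: "locally_bounded_on_halfline A" "locally_bounded_on_halfline B" "locally_bounded_on_halfline C"
    and "0 \<le> K"
    and nonneg: "\<And>x t \<eta>. 0 \<le> x \<Longrightarrow> 0 \<le> t \<Longrightarrow> x + K * t \<le> \<eta> \<Longrightarrow> 0 \<le> t * A \<eta> + x * B \<eta> + C \<eta>"
  shows "locally_lipschitz_nonneg_tail ({0..} \<times> {0..}) (\<lambda>p \<eta>. snd p * A \<eta> + fst p * B \<eta> + C \<eta>)"
  unfolding locally_lipschitz_nonneg_tail_def
proof
  fix p\<^sub>0 :: "real \<times> real"
  assume "p\<^sub>0 \<in> {0..} \<times> {0..}"
  then obtain a b where p\<^sub>0: "p\<^sub>0 = (a, b)" "0 \<le> a" "0 \<le> b"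
    by auto
  text \<open>On the unit ball around \<open>(a, b)\<close> we have \<open>x + K t \<le> Y\<close>, so all integrands are nonnegative
    beyond \<open>Y\<close>.\<close>
  define Y where "Y = a + 1 + K * (b + 1)"
  obtain M\<^sub>a M\<^sub>b M\<^sub>c where M: "\<forall>\<eta>\<in>{0..Y}. \<bar>A \<eta>\<bar> \<le> M\<^sub>a" "\<forall>\<eta>\<in>{0..Y}. \<bar>B \<eta>\<bar> \<le> M\<^sub>b"
    "\<forall>\<eta>\<in>{0..Y}. \<bar>C \<eta>\<bar> \<le> M\<^sub>c"
    using bounded unfolding locally_bounded_on_halfline_def by meson
  have "0 \<le> Y"
    using p\<^sub>0 \<open>0 \<le> K\<close> by (simp add: Y_def)
  then have "0 \<le> M\<^sub>a" "0 \<le> M\<^sub>b"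
    using M by (meson abs_ge_zero atLeastAtMost_iff order_refl order_trans)+
  define U where "U = ball p\<^sub>0 1 \<inter> {0..} \<times> {0..}"
  have near: "0 \<le> fst p" "0 \<le> snd p" "fst p \<le> a + 1" "snd p \<le> b + 1" "fst p + K * snd p \<le> Y"
    if "p \<in> U" for p
    using mem_ball_quadrant_bounds[of p a b K] that \<open>0 \<le> K\<close> by (simp_all add: U_def Y_def p\<^sub>0(1))
  have "\<forall>p\<in>U. (\<forall>\<eta>\<ge>Y. 0 \<le> snd p * A \<eta> + fst p * B \<eta> + C \<eta>) \<and>
      (\<forall>\<eta>\<in>{0..Y}. \<bar>snd p * A \<eta> + fst p * B \<eta> + C \<eta>\<bar> \<le> (b + 1) * M\<^sub>a + (a + 1) * M\<^sub>b + M\<^sub>c \<and>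
        (\<forall>q\<in>U. \<bar>snd p * A \<eta> + fst p * B \<eta> + C \<eta> - (snd q * A \<eta> + fst q * B \<eta> + C \<eta>)\<bar>
          \<le> (M\<^sub>a + M\<^sub>b) * dist p q))"
  proof (intro ballI allI impI conjI)
    fix p q \<eta> assume "p \<in> U"
    then show "0 \<le> snd p * A \<eta> + fst p * B \<eta> + C \<eta>" if "Y \<le> \<eta>"
      using near[OF \<open>p \<in> U\<close>] that by (intro nonneg) auto
    show "\<bar>snd p * A \<eta> + fst p * B \<eta> + C \<eta>\<bar> \<le> (b + 1) * M\<^sub>a + (a + 1) * M\<^sub>b + M\<^sub>c" if "\<eta> \<in> {0..Y}"
      using near[OF \<open>p \<in> U\<close>] that M by (intro abs_affine_combination_le) auto
    show "\<bar>snd p * A \<eta> + fst p * B \<eta> + C \<eta> - (snd q * A \<eta> + fst q * B \<eta> + C \<eta>)\<bar>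
        \<le> (M\<^sub>a + M\<^sub>b) * dist p q" if "\<eta> \<in> {0..Y}"
      using abs_affine_combination_diff_le[of "A \<eta>" M\<^sub>a "B \<eta>" M\<^sub>b "snd p" "fst p" "C \<eta>" "snd q" "fst q"] that M
      by simp
  qed
  with \<open>0 \<le> Y\<close> add_nonneg_nonneg[OF \<open>0 \<le> M\<^sub>a\<close> \<open>0 \<le> M\<^sub>b\<close>] zero_less_one
  show "\<exists>r>0. \<exists>Y\<ge>0. \<exists>\<Lambda>\<ge>0. \<exists>E. \<forall>p\<in>ball p\<^sub>0 r \<inter> {0..} \<times> {0..}.
      (\<forall>\<eta>\<ge>Y. 0 \<le> snd p * A \<eta> + fst p * B \<eta> + C \<eta>) \<and>
      (\<forall>\<eta>\<in>{0..Y}. \<bar>snd p * A \<eta> + fst p * B \<eta> + C \<eta>\<bar> \<le> E \<and>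
        (\<forall>q\<in>ball p\<^sub>0 r \<inter> {0..} \<times> {0..}. \<bar>snd p * A \<eta> + fst p * B \<eta> + C \<eta> - (snd q * A \<eta> + fst q * B \<eta> + C \<eta>)\<bar>
          \<le> \<Lambda> * dist p q))"
    unfolding U_def by blast
qed

lemma locally_lipschitz_on_inf_partial_integral_affine:
  fixes A B C :: "real \<Rightarrow> real" and K :: real
  assumes "A \<in> borel_measurable (restrict_space lborel {0..})"
      "B \<in> borel_measurable (restrict_space lborel {0..})"
      "C \<in> borel_measurable (restrict_space lborel {0..})"
    and "locally_bounded_on_halfline A" "locally_bounded_on_halfline B" "locally_bounded_on_halfline C"
    and "0 \<le> K"
    and "\<And>x t \<eta>. 0 \<le> x \<Longrightarrow> 0 \<le> t \<Longrightarrow> x + K * t \<le> \<eta> \<Longrightarrow> 0 \<le> t * A \<eta> + x * B \<eta> + C \<eta>"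
  shows "locally_lipschitz_on ({0..} \<times> {0..})
    (\<lambda>(x, t). inf_partial_integral (\<lambda>\<eta>. t * A \<eta> + x * B \<eta> + C \<eta>))"
  unfolding locally_lipschitz_on_def case_prod_unfold
proof
  define g where "g p = (\<lambda>\<eta>. snd p * A \<eta> + fst p * B \<eta> + C \<eta>)" for p :: "real \<times> real"
  fix p\<^sub>0 :: "real \<times> real"
  assume "p\<^sub>0 \<in> {0..} \<times> {0..}"
  then obtain r Y \<Lambda> E where "r > 0" "Y \<ge> 0" "\<Lambda> \<ge> 0"
    and bounds: "\<forall>p\<in>ball p\<^sub>0 r \<inter> {0..} \<times> {0..}. (\<forall>\<eta>\<ge>Y. 0 \<le> g p \<eta>) \<and>
        (\<forall>\<eta>\<in>{0..Y}. \<bar>g p \<eta>\<bar> \<le> E \<and>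
          (\<forall>q\<in>ball p\<^sub>0 r \<inter> {0..} \<times> {0..}. \<bar>g p \<eta> - g q \<eta>\<bar> \<le> \<Lambda> * dist p q))"
    using locally_lipschitz_nonneg_tail_affine[OF assms(4-8)]
    unfolding locally_lipschitz_nonneg_tail_def g_def by blast
  have "(Y * \<Lambda>)-lipschitz_on (ball p\<^sub>0 r \<inter> {0..} \<times> {0..}) (\<lambda>p. inf_partial_integral (g p))"
    using \<open>Y \<ge> 0\<close> \<open>\<Lambda> \<ge> 0\<close> bounds set_integrable_affine_combination[OF assms(1-6)]
    by (intro lipschitz_on_inf_partial_integral[where E = E]) (auto simp: g_def)
  then show "\<exists>r>0. \<exists>L. L-lipschitz_on (ball p\<^sub>0 r \<inter> {0..} \<times> {0..})
      (\<lambda>p. inf_partial_integral (\<lambda>\<eta>. snd p * A \<eta> + fst p * B \<eta> + C \<eta>))"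
    using \<open>r > 0\<close> unfolding g_def by blast
qed

lemma Fmin_eq_inf_partial_integral:
  "Fmin u0 \<rho>0 x t = inf_partial_integral (\<lambda>\<eta>. t * (u0 \<eta> * \<rho>0 \<eta>) + x * - \<rho>0 \<eta> + \<eta> * \<rho>0 \<eta>)"
  unfolding Fmin_def Fyxt_def inf_partial_integral_def by (simp add: algebra_simps)

lemma Gmin_eq_inf_partial_integral:
  "Gmin ub \<rho>b x t = inf_partial_integral (\<lambda>\<eta>. t * - (ub \<eta> * ub \<eta> * \<rho>b \<eta>)
    + x * (ub \<eta> * \<rho>b \<eta>) + \<eta> * (ub \<eta> * ub \<eta> * \<rho>b \<eta>))"
  unfolding Gmin_def Gtxt_def inf_partial_integral_def by (simp add: algebra_simps)

lemma Fmin_integrand_nonneg: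
  fixes u0 \<rho>0 :: "real \<Rightarrow> real"
  assumes "\<forall>\<eta>\<ge>0. \<bar>u0 \<eta>\<bar> \<le> M" "\<forall>\<eta>\<ge>0. \<rho>0 \<eta> > 0" "0 \<le> M"
    and "0 \<le> x" "0 \<le> t" "x + M * t \<le> \<eta>"
  shows "0 \<le> t * (u0 \<eta> * \<rho>0 \<eta>) + x * - \<rho>0 \<eta> + \<eta> * \<rho>0 \<eta>"
proof -
  have "0 \<le> M * t"
    using assms(3,5) by simp
  then have "0 \<le> \<eta>"
    using assms(4,6) by linarith
  then have "t * - M \<le> t * u0 \<eta>"
    using assms(1,5) by (intro mult_left_mono) (auto simp: abs_le_iff)
  then have "0 \<le> (t * u0 \<eta> + \<eta> - x) * \<rho>0 \<eta>"
    using assms(2,6) \<open>0 \<le> \<eta>\<close> by (intro mult_nonneg_nonneg) (auto simp: algebra_simps less_imp_le)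
  then show ?thesis
    by (simp add: algebra_simps)
qed

lemma Gmin_integrand_nonneg:
  fixes ub \<rho>b :: "real \<Rightarrow> real"
  assumes "\<forall>\<eta>\<ge>0. ub \<eta> > 0" "\<forall>\<eta>\<ge>0. \<rho>b \<eta> > 0"
    and "0 \<le> x" "0 \<le> t" "x + 1 * t \<le> \<eta>"
  shows "0 \<le> t * - (ub \<eta> * ub \<eta> * \<rho>b \<eta>) + x * (ub \<eta> * \<rho>b \<eta>) + \<eta> * (ub \<eta> * ub \<eta> * \<rho>b \<eta>)"
proof -
  have "0 < ub \<eta>" "0 < \<rho>b \<eta>"
    using assms by auto
  then have "0 \<le> (x + ub \<eta> * (\<eta> - t)) * (ub \<eta> * \<rho>b \<eta>)"
    using assms(3-5) by simp
  then show ?thesis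
    by (simp add: algebra_simps)
qed

theorem lemma2p5:
  fixes u0 ub \<rho>0 \<rho>b :: "real \<Rightarrow> real"
  assumes u0_meas: "set_borel_measurable lborel {0..} u0"
    and u0_bdd: "\<exists>M. \<forall>\<eta>\<ge>0. \<bar>u0 \<eta>\<bar> \<le> M"
    and ub_meas: "set_borel_measurable lborel {0..} ub"
    and ub_bdd: "\<exists>M. \<forall>\<eta>\<ge>0. \<bar>ub \<eta>\<bar> \<le> M"
    and ub_pos: "\<forall>\<eta>\<ge>0. ub \<eta> > 0"
    and \<rho>0_meas: "set_borel_measurable lborel {0..} \<rho>0"
    and \<rho>0_pos: "\<forall>\<eta>\<ge>0. \<rho>0 \<eta> > 0"
    and \<rho>0_lbdd: "\<forall>T. \<exists>M. \<forall>\<eta>\<in>{0..T}. \<bar>\<rho>0 \<eta>\<bar> \<le> M"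
    and \<rho>b_meas: "set_borel_measurable lborel {0..} \<rho>b"
    and \<rho>b_pos: "\<forall>\<eta>\<ge>0. \<rho>b \<eta> > 0"
    and \<rho>b_lbdd: "\<forall>T. \<exists>M. \<forall>\<eta>\<in>{0..T}. \<bar>\<rho>b \<eta>\<bar> \<le> M"
  shows "locally_lipschitz_on ({0..} \<times> {0..}) (\<lambda>(x, t). Fmin u0 \<rho>0 x t)
       \<and> locally_lipschitz_on ({0..} \<times> {0..}) (\<lambda>(x, t). Gmin ub \<rho>b x t)"
proof
  obtain M where M: "\<forall>\<eta>\<ge>0. \<bar>u0 \<eta>\<bar> \<le> M"
    using u0_bdd by blast
  then have "0 \<le> M"
    by force
  have measurable: "u0 \<in> borel_measurable (restrict_space lborel {0..})"
      "\<rho>0 \<in> borel_measurable (restrict_space lborel {0..})"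
      "ub \<in> borel_measurable (restrict_space lborel {0..})"
      "\<rho>b \<in> borel_measurable (restrict_space lborel {0..})"
    using u0_meas \<rho>0_meas ub_meas \<rho>b_meas by (simp_all add: set_borel_measurable_iff_restrict_space)
  have bounded: "locally_bounded_on_halfline u0" "locally_bounded_on_halfline \<rho>0"
      "locally_bounded_on_halfline ub" "locally_bounded_on_halfline \<rho>b"
    using locally_bounded_on_halfline_if_bounded[OF u0_bdd] locally_bounded_on_halfline_if_bounded[OF ub_bdd]
      \<rho>0_lbdd \<rho>b_lbdd
    by (simp_all add: locally_bounded_on_halfline_def)
  show "locally_lipschitz_on ({0..} \<times> {0..}) (\<lambda>(x, t). Fmin u0 \<rho>0 x t)"
    unfolding Fmin_eq_inf_partial_integral
    using \<open>0 \<le> M\<close> Fmin_integrand_nonneg[OF M \<rho>0_pos \<open>0 \<le> M\<close>]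
    by (intro locally_lipschitz_on_inf_partial_integral_affine[where K = M] borel_measurable_times
        borel_measurable_uminus borel_measurable_restrict_space_ident locally_bounded_on_halfline_mult
        locally_bounded_on_halfline_minus locally_bounded_on_halfline_ident measurable bounded)
  show "locally_lipschitz_on ({0..} \<times> {0..}) (\<lambda>(x, t). Gmin ub \<rho>b x t)"
    unfolding Gmin_eq_inf_partial_integral
    using Gmin_integrand_nonneg[OF ub_pos \<rho>b_pos]
    by (intro locally_lipschitz_on_inf_partial_integral_affine[where K = 1] borel_measurable_times
        borel_measurable_uminus borel_measurable_restrict_space_ident locally_bounded_on_halfline_mult
        locally_bounded_on_halfline_minus locally_bounded_on_halfline_ident measurable bounded) simp_all
qed

end
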